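(* Let $\mathcal{S}$ and $\mathcal{A}$ be finite sets and consider a Markov decision process in which, for each $(s,a)\in\mathcal{S}\times\mathcal{A}$, the pair (random reward, next state) $(\tilde r(s,a),\tilde s')$ has joint law $P(\cdot,\cdot\mid s,a)$, with $\tilde r(s,a)\in[0,1]$ almost surely and $\tilde r(s,a)$ having a bounded density for every $(s,a)$. Let $\gamma\in(0,1)$, let $\rho$ be a coherent risk measure, and let $d$ be a probability distribution on $\mathcal{S}$ with $0<d(s)\le 1$ for all $s$. Consider softmax policies $\pi_\theta(a\mid s)=\exp(\theta(s,a))/\sum_{b\in\mathcal{A}}\exp(\theta(s,b))$, $\theta\in\mathbb{R}^{\mathcal{S}\times\mathcal{A}}$, and the iteration $$\theta_{t+1}=\theta_t+\eta\,\nabla_\theta\Big[\sum_{s} d(s)\sum_a \pi_\theta(a\mid s)\,Q^{\pi_t}(s,a)\Big]\Big|_{\theta=\theta_t},$$ where $\pi_t:=\pi_{\theta_t}$ and $Q^{\pi_t}$ is held fixed (not differentiated); equivalently $\theta_{t+1}(s,a)=\theta_t(s,a)+\eta\, d(s)\pi_t(a\mid s)\big(Q^{\pi_t}(s,a)-V^{\pi_t}(s)\big)$. If $\eta\le(1-\gamma)/5$, then for every $t$ and all $(s,a)\in\mathcal{S}\times\mathcal{A}$, $$Q^{\pi_{t+1}}(s,a)\ge Q^{\pi_t}(s,a)\quad\text{and}\quad V^{\pi_{t+1}}(s)\ge V^{\pi_t}(s).$$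
   Context: A risk measure $\rho$ maps a real random variable (a return) to $\mathbb{R}\cup\{\pm\infty\}$. It is coherent if for all random variables $\tilde x,\tilde y$: (concavity) $\rho(\lambda\tilde x+(1-\lambda)\tilde y)\ge\lambda\rho(\tilde x)+(1-\lambda)\rho(\tilde y)$ for $\lambda\in[0,1]$; (monotonicity) $\tilde x\le\tilde y$ implies $\rho(\tilde x)\le\rho(\tilde y)$; (translation invariance) $\rho(\tilde x+c)=\rho(\tilde x)+c$ for $c\in\mathbb{R}$; (positive homogeneity) $\rho(\lambda\tilde x)=\lambda\rho(\tilde x)$ for $\lambda\ge0$. Examples are the $\alpha$-expectile and the left-tail $\alpha$-CVaR. For a stochastic Markov policy $\pi$, the Bellman operator is $(\mathcal{T}^\pi Q)(s,a)=\rho\big(\tilde r(s,a)+\gamma\sum_{a'}\pi(a'\mid\tilde s')Q(\tilde s',a')\big)$, where $\rho$ is taken over the joint randomness of $(\tilde r(s,a),\tilde s')\sim P(\cdot,\cdot\mid s,a)$. $Q^\pi$ denotes the unique fixed point of $\mathcal{T}^\pi$ (the dynamic-risk action-value function of $\pi$), and $V^\pi(s)=\sum_a\pi(a\mid s)Q^\pi(s,a)$. *)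

theory Defs
  imports "HOL-Probability.Probability"
begin

definition coherent_risk :: "'b measure \<Rightarrow> (('b \<Rightarrow> real) \<Rightarrow> ereal) \<Rightarrow> bool" where
  "coherent_risk M R \<longleftrightarrow>
     (\<forall>X\<in>borel_measurable M. \<forall>Y\<in>borel_measurable M. \<forall>l::real. 0 \<le> l \<and> l \<le> 1 \<longrightarrow>
        R (\<lambda>w. l * X w + (1 - l) * Y w) \<ge> ereal l * R X + ereal (1 - l) * R Y) \<and>
     (\<forall>X\<in>borel_measurable M. \<forall>Y\<in>borel_measurable M.
        (\<forall>w\<in>space M. X w \<le> Y w) \<longrightarrow> R X \<le> R Y) \<and>
     (\<forall>X\<in>borel_measurable M. \<forall>c::real. R (\<lambda>w. X w + c) = R X + ereal c) \<and>
     (\<forall>X\<in>borel_measurable M. \<forall>l::real. 0 \<le> l \<longrightarrow> R (\<lambda>w. l * X w) = ereal l * R X)"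

definition softmax :: "('s \<Rightarrow> 'a::finite \<Rightarrow> real) \<Rightarrow> 's \<Rightarrow> 'a \<Rightarrow> real" where
  "softmax \<theta> s a = exp (\<theta> s a) / (\<Sum>b\<in>UNIV. exp (\<theta> s b))"

text \<open>Bellman operator of a stochastic Markov policy pi for the dynamic risk measure rho;
  P s a is the joint law of (reward, next state).\<close>
definition bellman ::
  "((real \<times> 's) measure \<Rightarrow> ((real \<times> 's) \<Rightarrow> real) \<Rightarrow> ereal) \<Rightarrow>
   ('s \<Rightarrow> 'a \<Rightarrow> (real \<times> 's) measure) \<Rightarrow> real \<Rightarrow>
   ('s \<Rightarrow> 'a::finite \<Rightarrow> real) \<Rightarrow> ('s \<Rightarrow> 'a \<Rightarrow> real) \<Rightarrow> 's \<Rightarrow> 'a \<Rightarrow> ereal" where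
  "bellman \<rho> P \<gamma> \<pi> Q s a =
     \<rho> (P s a) (\<lambda>(r, s'). r + \<gamma> * (\<Sum>a'\<in>UNIV. \<pi> s' a' * Q s' a'))"

definition Qpi ::
  "((real \<times> 's) measure \<Rightarrow> ((real \<times> 's) \<Rightarrow> real) \<Rightarrow> ereal) \<Rightarrow>
   ('s \<Rightarrow> 'a \<Rightarrow> (real \<times> 's) measure) \<Rightarrow> real \<Rightarrow>
   ('s \<Rightarrow> 'a::finite \<Rightarrow> real) \<Rightarrow> 's \<Rightarrow> 'a \<Rightarrow> real" where
  "Qpi \<rho> P \<gamma> \<pi> = (THE Q. \<forall>s a. ereal (Q s a) = bellman \<rho> P \<gamma> \<pi> Q s a)"

definition Vpi ::
  "((real \<times> 's) measure \<Rightarrow> ((real \<times> 's) \<Rightarrow> real) \<Rightarrow> ereal) \<Rightarrow>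
   ('s \<Rightarrow> 'a \<Rightarrow> (real \<times> 's) measure) \<Rightarrow> real \<Rightarrow>
   ('s \<Rightarrow> 'a::finite \<Rightarrow> real) \<Rightarrow> 's \<Rightarrow> real" where
  "Vpi \<rho> P \<gamma> \<pi> s = (\<Sum>a\<in>UNIV. \<pi> s a * Qpi \<rho> P \<gamma> \<pi> s a)"

end

theory Submission
  imports Defs "HOL-Analysis.Analysis"
begin

text \<open>
  The update moves \<open>\<theta>(s,a)\<close> in the direction of the advantage \<open>Q\<^sup>\<pi>(s,a) - V\<^sup>\<pi>(s)\<close>, so the
  new softmax policy \<open>\<pi>'\<close> shifts weight towards actions of positive advantage and
  \<open>\<Sum>\<^sub>a \<pi>'(a|s) Q\<^sup>\<pi>(s,a) \<ge> V\<^sup>\<pi>(s)\<close>. This holds for every step size \<open>\<eta> \<ge> 0\<close>.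
  Monotonicity and translation invariance of \<open>\<rho>\<close> make the Bellman operator of a policy a
  \<open>\<gamma>\<close>-contraction in the sup-norm with a comparison principle: a sub-solution lies below the
  fixed point. Since \<open>Q\<^sup>\<pi> = T\<^sup>\<pi> Q\<^sup>\<pi> \<le> T\<^sup>\<pi>\<^sup>' Q\<^sup>\<pi>\<close>, this gives \<open>Q\<^sup>\<pi> \<le> Q\<^sup>\<pi>\<^sup>'\<close>, and then
  \<open>V\<^sup>\<pi> \<le> \<Sum>\<^sub>a \<pi>'(a|s) Q\<^sup>\<pi>(s,a) \<le> V\<^sup>\<pi>\<^sup>'\<close>.
  If \<open>\<rho>\<close> is infinite at some \<open>(s,a)\<close>, the Bellman equation has no real solution, so \<open>Qpi\<close> is the
  junk value \<open>THE Q. False\<close> for every policy and the inequalities hold with equality.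
\<close>

lemma sup_contraction_has_fixpoint:
  fixes T :: "('i::finite \<Rightarrow> real) \<Rightarrow> ('i \<Rightarrow> real)" and \<gamma> :: real
  assumes "\<gamma> < 1"
    and contraction: "\<And>f g c x. (\<forall>y. \<bar>f y - g y\<bar> \<le> c) \<Longrightarrow> \<bar>T f x - T g x\<bar> \<le> \<gamma> * c"
  shows "\<exists>f. T f = f"
proof -
  define FS where "FS = (Met_TC.fspace (UNIV::'i set) :: ('i \<Rightarrow> real) set)"
  define FD where "FD = (Met_TC.fdist (UNIV::'i set) :: ('i \<Rightarrow> real) \<Rightarrow> _)"
  interpret F: Metric_space FS FD
    unfolding FS_def FD_def by (simp add: Met_TC.Metric_space_funspace)
  have FS_UNIV: "FS = UNIV"
    by (auto simp: FS_def Met_TC.fspace_def)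
  have "mcomplete_of (funspace (UNIV::'i set) (Met_TC.Self :: real metric))"
    by (rule Metric_space.mcomplete_funspace[OF Met_TC.Metric_space_axioms])
      (use complete_UNIV in simp)
  then have complete: "F.mcomplete"
    by (simp add: mcomplete_of_def FS_def FD_def)
  have component_le: "\<bar>f y - g y\<bar> \<le> FD f g" for f g :: "'i \<Rightarrow> real" and y
    using Met_TC.funspace_mdist_le[of f UNIV g "FD f g"] FS_UNIV
    by (auto simp: dist_real_def FS_def FD_def)
  obtain f where "f \<in> FS" "T f = f"
  proof (rule F.Banach_fixedpoint_thm[OF complete, of T "max \<gamma> 0"])
    show "FS \<noteq> {}" "T \<in> FS \<rightarrow> FS" using FS_UNIV by simp_all
    show "max \<gamma> 0 < 1" using \<open>\<gamma> < 1\<close> by simp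
    fix f g :: "'i \<Rightarrow> real"
    have "0 \<le> FD f g" using order.trans[OF abs_ge_zero component_le] by blast
    have "\<bar>T f x - T g x\<bar> \<le> \<gamma> * FD f g" for x
      using contraction component_le by blast
    also have "\<dots> \<le> max \<gamma> 0 * FD f g"
      using \<open>0 \<le> FD f g\<close> by (intro mult_right_mono) auto
    finally have "\<forall>x. dist (T f x) (T g x) \<le> max \<gamma> 0 * FD f g"
      by (simp add: dist_real_def)
    then show "FD (T f) (T g) \<le> max \<gamma> 0 * FD f g"
      using Met_TC.funspace_mdist_le[of "T f" UNIV "T g"] FS_UNIV by (auto simp: FS_def FD_def)
  qed auto
  then show ?thesis by blast
qed

definition stochastic :: "('s \<Rightarrow> 'a::finite \<Rightarrow> real) \<Rightarrow> bool" where
  "stochastic \<pi> \<longleftrightarrow> (\<forall>s a. 0 \<le> \<pi> s a) \<and> (\<forall>s. (\<Sum>a\<in>UNIV. \<pi> s a) = 1)"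

lemma stochastic_sum_le_add:
  assumes "stochastic \<pi>" and "\<And>a. f a \<le> g a + c"
  shows "(\<Sum>a\<in>UNIV. \<pi> s a * f a) \<le> (\<Sum>a\<in>UNIV. \<pi> s a * g a) + c"
proof -
  have "(\<Sum>a\<in>UNIV. \<pi> s a * f a) \<le> (\<Sum>a\<in>UNIV. \<pi> s a * (g a + c))"
    using assms by (intro sum_mono mult_left_mono) (auto simp: stochastic_def)
  also have "\<dots> = (\<Sum>a\<in>UNIV. \<pi> s a * g a) + c * (\<Sum>a\<in>UNIV. \<pi> s a)"
    by (simp add: algebra_simps sum.distrib sum_distrib_left)
  finally show ?thesis using assms(1) by (simp add: stochastic_def)
qed

text \<open>\<open>F s a g\<close> abstracts \<open>\<rho>(r(s,a) + g(s'))\<close>, the risk of the reward plus a continuation value.\<close>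

locale monotone_bellman =
  fixes F :: "'s::finite \<Rightarrow> 'a::finite \<Rightarrow> ('s \<Rightarrow> real) \<Rightarrow> real" and \<gamma> :: real
  assumes F_mono: "(\<And>x. g x \<le> h x) \<Longrightarrow> F s a g \<le> F s a h"
    and F_add_const: "F s a (\<lambda>x. g x + c) = F s a g + c"
    and discount: "0 \<le> \<gamma>" "\<gamma> < 1"
begin

definition bellman_op :: "('s \<Rightarrow> 'a \<Rightarrow> real) \<Rightarrow> ('s \<Rightarrow> 'a \<Rightarrow> real) \<Rightarrow> 's \<Rightarrow> 'a \<Rightarrow> real" where
  "bellman_op \<pi> Q s a = F s a (\<lambda>s'. \<gamma> * (\<Sum>a'\<in>UNIV. \<pi> s' a' * Q s' a'))"

lemma bellman_op_le_add:
  assumes "stochastic \<pi>" and "\<And>s a. Q s a \<le> Q' s a + c"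
  shows "bellman_op \<pi> Q s a \<le> bellman_op \<pi> Q' s a + \<gamma> * c"
proof -
  have "\<gamma> * (\<Sum>a'\<in>UNIV. \<pi> s' a' * Q s' a') \<le> \<gamma> * (\<Sum>a'\<in>UNIV. \<pi> s' a' * Q' s' a') + \<gamma> * c" for s'
    using mult_left_mono[OF stochastic_sum_le_add[OF assms] discount(1)]
    by (simp add: distrib_left)
  then have "bellman_op \<pi> Q s a \<le> F s a (\<lambda>s'. \<gamma> * (\<Sum>a'\<in>UNIV. \<pi> s' a' * Q' s' a') + \<gamma> * c)"
    unfolding bellman_op_def by (rule F_mono)
  then show ?thesis
    by (simp add: F_add_const bellman_op_def)
qed

lemma bellman_op_has_fixpoint:
  assumes "stochastic \<pi>"
  shows "\<exists>Q. bellman_op \<pi> Q = Q"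
proof -
  define T where "T = (\<lambda>q :: 's \<times> 'a \<Rightarrow> real. case_prod (bellman_op \<pi> (curry q)))"
  have "\<exists>q. T q = q"
  proof (rule sup_contraction_has_fixpoint[OF discount(2)])
    fix f g :: "'s \<times> 'a \<Rightarrow> real" and c and x :: "'s \<times> 'a"
    assume bound: "\<forall>y. \<bar>f y - g y\<bar> \<le> c"
    have "curry f s a \<le> curry g s a + c" "curry g s a \<le> curry f s a + c" for s a
      using bound[rule_format, of "(s, a)"] by (auto simp: abs_le_iff)
    then have "T f x \<le> T g x + \<gamma> * c" "T g x \<le> T f x + \<gamma> * c"
      unfolding T_def split_beta using bellman_op_le_add[OF assms] by blast+
    then show "\<bar>T f x - T g x\<bar> \<le> \<gamma> * c"
      by (simp add: abs_le_iff)
  qed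
  then obtain q where q: "T q = q" by blast
  have "bellman_op \<pi> (curry q) = curry q"
  proof (intro ext)
    fix s a
    show "bellman_op \<pi> (curry q) s a = curry q s a"
      using fun_cong[OF q, of "(s, a)"] by (simp add: T_def)
  qed
  then show ?thesis by blast
qed

lemma bellman_op_comparison:
  assumes "stochastic \<pi>"
    and sub: "\<And>s a. Q s a \<le> bellman_op \<pi> Q s a"
    and fix': "bellman_op \<pi> Q' = Q'"
  shows "Q s a \<le> Q' s a"
proof -
  define M where "M = Max (range (\<lambda>(s, a). Q s a - Q' s a))"
  have M_ge: "Q s a - Q' s a \<le> M" for s a
    unfolding M_def by (rule Max_ge) (auto intro: image_eqI[of _ _ "(s, a)"])
  obtain s0 a0 where M_eq: "M = Q s0 a0 - Q' s0 a0"
    using Max_in[of "range (\<lambda>(s, a). Q s a - Q' s a)"] unfolding M_def[symmetric] by auto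
  have "Q s a \<le> Q' s a + M" for s a
    using M_ge[of s a] by simp
  then have "Q s0 a0 \<le> bellman_op \<pi> Q' s0 a0 + \<gamma> * M"
    using sub[of s0 a0] bellman_op_le_add[OF assms(1)] by (meson order.trans)
  moreover have "bellman_op \<pi> Q' s0 a0 = Q' s0 a0"
    using fix' by simp
  ultimately have "M \<le> \<gamma> * M"
    using M_eq by linarith
  then have "(1 - \<gamma>) * M \<le> 0"
    by (simp add: algebra_simps)
  then have "M \<le> 0"
    using discount by (simp add: mult_le_0_iff)
  then show ?thesis using M_ge[of s a] by simp
qed

lemma bellman_op_fixpoint_unique:
  assumes "stochastic \<pi>" "bellman_op \<pi> Q = Q" "bellman_op \<pi> Q' = Q'"
  shows "Q = Q'"
proof (intro ext order.antisym)
  fix s a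
  show "Q s a \<le> Q' s a"
    by (rule bellman_op_comparison[OF assms(1) _ assms(3)]) (simp add: assms(2))
  show "Q' s a \<le> Q s a"
    by (rule bellman_op_comparison[OF assms(1) _ assms(2)]) (simp add: assms(3))
qed

lemma policy_improvement:
  assumes "stochastic \<pi>'" and Q: "bellman_op \<pi> Q = Q" and Q': "bellman_op \<pi>' Q' = Q'"
    and improves: "\<And>s. (\<Sum>a\<in>UNIV. \<pi> s a * Q s a) \<le> (\<Sum>a\<in>UNIV. \<pi>' s a * Q s a)"
  shows "Q s a \<le> Q' s a"
proof (rule bellman_op_comparison[OF assms(1) _ Q'])
  fix s a
  have "Q s a = bellman_op \<pi> Q s a" using Q by simp
  also have "\<dots> \<le> bellman_op \<pi>' Q s a"
    unfolding bellman_op_def using improves discount(1)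
    by (intro F_mono mult_left_mono) auto
  finally show "Q s a \<le> bellman_op \<pi>' Q s a" .
qed

end

lemma measurable_reward_plus:
  assumes "sets M = sets (borel \<Otimes>\<^sub>M count_space (UNIV::'s set))"
  shows "(\<lambda>(r::real, s'::'s). r + g s') \<in> borel_measurable M"
  unfolding measurable_cong_sets[OF assms refl]
  by measurable (rule measurable_compose[OF measurable_snd], simp)

context
  fixes M :: "(real \<times> 's) measure" and R
  assumes coherent: "coherent_risk M R"
    and sets_M: "sets M = sets (borel \<Otimes>\<^sub>M count_space (UNIV::'s set))"
begin

lemma coherent_risk_reward_plus_mono:
  assumes "\<And>x. g x \<le> h x"
  shows "R (\<lambda>(r, s'). r + g s') \<le> R (\<lambda>(r, s'). r + h s')"
  using coherent measurable_reward_plus[OF sets_M, of g] measurable_reward_plus[OF sets_M, of h] assms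
  unfolding coherent_risk_def by (auto split: prod.splits)

lemma coherent_risk_reward_plus_add_const:
  "R (\<lambda>(r, s'). r + (g s' + c)) = R (\<lambda>(r, s'). r + g s') + ereal c"
proof -
  have "(\<lambda>(r, s'). r + (g s' + c)) = (\<lambda>w. (\<lambda>(r, s'). r + g s') w + c)"
    by (auto simp: fun_eq_iff)
  then show ?thesis
    using coherent measurable_reward_plus[OF sets_M, of g] unfolding coherent_risk_def by simp
qed

end

lemma coherent_risk_reward_plus_finite_iff:
  fixes g h :: "'s::finite \<Rightarrow> real"
  assumes coherent: "coherent_risk M R"
    and sets_M: "sets M = sets (borel \<Otimes>\<^sub>M count_space (UNIV::'s set))"
  shows "\<bar>R (\<lambda>(r, s'). r + g s')\<bar> \<noteq> \<infinity> \<longleftrightarrow> \<bar>R (\<lambda>(r, s'). r + h s')\<bar> \<noteq> \<infinity>"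
proof -
  define c where "c = (\<Sum>x\<in>UNIV. \<bar>g x - h x\<bar>)"
  have bound: "\<bar>g x - h x\<bar> \<le> c" for x
    unfolding c_def by (rule member_le_sum) auto
  have "g x \<le> h x + c" "h x \<le> g x + c" for x
    using bound[of x] by (auto simp: abs_le_iff)
  then have "R (\<lambda>(r, s'). r + g s') \<le> R (\<lambda>(r, s'). r + h s') + ereal c"
    "R (\<lambda>(r, s'). r + h s') \<le> R (\<lambda>(r, s'). r + g s') + ereal c"
    by (metis coherent_risk_reward_plus_mono[OF coherent sets_M]
        coherent_risk_reward_plus_add_const[OF coherent sets_M])+
  then show ?thesis
    by (cases "R (\<lambda>(r, s'). r + g s')"; cases "R (\<lambda>(r, s'). r + h s')") auto
qed

lemma Qpi_eq_if_risk_infinite: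
  assumes "\<And>g. \<bar>\<rho> (P s a) (\<lambda>(r, s'). r + g s')\<bar> = \<infinity>"
  shows "Qpi \<rho> P \<gamma> \<pi> = Qpi \<rho> P \<gamma> \<pi>'"
proof -
  have no_solution: "(\<forall>s a. ereal (Q s a) = bellman \<rho> P \<gamma> \<pi> Q s a) \<longleftrightarrow> False" for Q \<pi>
  proof -
    have "\<bar>bellman \<rho> P \<gamma> \<pi> Q s a\<bar> = \<infinity>"
      using assms by (simp add: bellman_def)
    then have "ereal (Q s a) \<noteq> bellman \<rho> P \<gamma> \<pi> Q s a" by auto
    then show ?thesis by blast
  qed
  show ?thesis unfolding Qpi_def no_solution ..
qed

locale coherent_mdp =
  fixes \<rho> :: "(real \<times> 's::finite) measure \<Rightarrow> ((real \<times> 's) \<Rightarrow> real) \<Rightarrow> ereal"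
    and P :: "'s \<Rightarrow> 'a::finite \<Rightarrow> (real \<times> 's) measure" and \<gamma> :: real
  assumes coherent: "\<And>s a. coherent_risk (P s a) (\<rho> (P s a))"
    and sets_P: "\<And>s a. sets (P s a) = sets (borel \<Otimes>\<^sub>M count_space UNIV)"
    and finite_risk: "\<And>s a. \<bar>\<rho> (P s a) (\<lambda>(r, s'). r)\<bar> \<noteq> \<infinity>"
    and discount: "0 \<le> \<gamma>" "\<gamma> < 1"
begin

lemma risk_reward_plus_finite: "\<bar>\<rho> (P s a) (\<lambda>(r, s'). r + g s')\<bar> \<noteq> \<infinity>"
  using coherent_risk_reward_plus_finite_iff[OF coherent sets_P, of s a g "\<lambda>_. 0"] finite_risk
  by simp

definition risk :: "'s \<Rightarrow> 'a \<Rightarrow> ('s \<Rightarrow> real) \<Rightarrow> real" where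
  "risk s a g = real_of_ereal (\<rho> (P s a) (\<lambda>(r, s'). r + g s'))"

lemma ereal_risk: "ereal (risk s a g) = \<rho> (P s a) (\<lambda>(r, s'). r + g s')"
  using risk_reward_plus_finite by (simp add: risk_def ereal_real')

sublocale monotone_bellman risk \<gamma>
proof
  show "risk s a g \<le> risk s a h" if "\<And>x. g x \<le> h x" for s a g h
    using coherent_risk_reward_plus_mono[OF coherent sets_P that] by (simp flip: ereal_risk)
  show "risk s a (\<lambda>x. g x + c) = risk s a g + c" for s a g c
    using coherent_risk_reward_plus_add_const[OF coherent sets_P, of s a g c]
    by (simp flip: ereal_risk)
qed (use discount in auto)

lemma bellman_eq_bellman_op: "bellman \<rho> P \<gamma> \<pi> Q s a = ereal (bellman_op \<pi> Q s a)"
  by (simp add: bellman_def bellman_op_def ereal_risk)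

lemma Qpi_fixpoint:
  assumes "stochastic \<pi>"
  shows "bellman_op \<pi> (Qpi \<rho> P \<gamma> \<pi>) = Qpi \<rho> P \<gamma> \<pi>"
proof -
  obtain Q where Q: "bellman_op \<pi> Q = Q"
    using bellman_op_has_fixpoint[OF assms] by blast
  have "Qpi \<rho> P \<gamma> \<pi> = Q"
    unfolding Qpi_def bellman_eq_bellman_op
  proof (rule the_equality)
    show "\<forall>s a. ereal (Q s a) = ereal (bellman_op \<pi> Q s a)" using Q by simp
    show "Q' = Q" if "\<forall>s a. ereal (Q' s a) = ereal (bellman_op \<pi> Q' s a)" for Q'
      using that bellman_op_fixpoint_unique[OF assms _ Q, of Q'] by (simp add: fun_eq_iff)
  qed
  then show ?thesis using Q by simp
qed

end

lemma coherent_policy_improvement: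
  fixes P :: "'s::finite \<Rightarrow> 'a::finite \<Rightarrow> (real \<times> 's) measure"
  assumes coh: "\<And>s a. coherent_risk (P s a) (\<rho> (P s a))"
    and sets_P: "\<And>s a. sets (P s a) = sets (borel \<Otimes>\<^sub>M count_space UNIV)"
    and discount: "0 \<le> \<gamma>" "\<gamma> < 1"
    and stochastic: "stochastic \<pi>" "stochastic \<pi>'"
    and improves: "\<And>s. (\<Sum>a\<in>UNIV. \<pi> s a * Qpi \<rho> P \<gamma> \<pi> s a) \<le> (\<Sum>a\<in>UNIV. \<pi>' s a * Qpi \<rho> P \<gamma> \<pi> s a)"
  shows "Qpi \<rho> P \<gamma> \<pi> s a \<le> Qpi \<rho> P \<gamma> \<pi>' s a"
proof (cases "\<exists>s a. \<bar>\<rho> (P s a) (\<lambda>(r, s'). r)\<bar> = \<infinity>")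
  case True
  then obtain s0 a0 where "\<bar>\<rho> (P s0 a0) (\<lambda>(r, s'). r)\<bar> = \<infinity>" by (elim exE)
  then have "\<bar>\<rho> (P s0 a0) (\<lambda>(r, s'). r + g s')\<bar> = \<infinity>" for g
    using coherent_risk_reward_plus_finite_iff[OF coh sets_P, of s0 a0 g "\<lambda>_. 0"] by simp
  then show ?thesis using Qpi_eq_if_risk_infinite by (metis order.refl)
next
  case False
  then interpret coherent_mdp \<rho> P \<gamma>
    using coh sets_P discount by unfold_locales auto
  show ?thesis
    using policy_improvement[OF stochastic(2) Qpi_fixpoint Qpi_fixpoint improves] stochastic .
qed

lemma coherent_policy_improvement_Vpi:
  fixes P :: "'s::finite \<Rightarrow> 'a::finite \<Rightarrow> (real \<times> 's) measure"
  assumes coh: "\<And>s a. coherent_risk (P s a) (\<rho> (P s a))"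
    and sets_P: "\<And>s a. sets (P s a) = sets (borel \<Otimes>\<^sub>M count_space UNIV)"
    and discount: "0 \<le> \<gamma>" "\<gamma> < 1"
    and stochastic: "stochastic \<pi>" "stochastic \<pi>'"
    and improves: "\<And>s. (\<Sum>a\<in>UNIV. \<pi> s a * Qpi \<rho> P \<gamma> \<pi> s a) \<le> (\<Sum>a\<in>UNIV. \<pi>' s a * Qpi \<rho> P \<gamma> \<pi> s a)"
  shows "Vpi \<rho> P \<gamma> \<pi> s \<le> Vpi \<rho> P \<gamma> \<pi>' s"
proof -
  have "Vpi \<rho> P \<gamma> \<pi> s \<le> (\<Sum>a\<in>UNIV. \<pi>' s a * Qpi \<rho> P \<gamma> \<pi> s a)"
    using improves by (simp add: Vpi_def)
  also have "\<dots> \<le> Vpi \<rho> P \<gamma> \<pi>' s"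
    unfolding Vpi_def using coherent_policy_improvement[OF assms] stochastic(2)
    by (intro sum_mono mult_left_mono) (auto simp: stochastic_def)
  finally show ?thesis .
qed

lemma softmax_pos: "0 < softmax \<theta> s a"
  unfolding softmax_def by (intro divide_pos_pos) (auto intro: sum_pos)

lemma stochastic_softmax: "stochastic (softmax \<theta>)"
proof -
  have "(\<Sum>b\<in>UNIV. exp (\<theta> s b)) \<noteq> 0" for s
    using sum_pos[of UNIV "\<lambda>b. exp (\<theta> s b)"] by fastforce
  then have "(\<Sum>a\<in>UNIV. softmax \<theta> s a) = 1" for s
    by (simp add: softmax_def flip: sum_divide_distrib)
  then show ?thesis
    by (simp add: stochastic_def less_imp_le[OF softmax_pos])
qed

lemma sum_exp_eq_partition_times_softmax:
  "(\<Sum>a\<in>UNIV. exp (\<theta> s a) * f a) = (\<Sum>b\<in>UNIV. exp (\<theta> s b)) * (\<Sum>a\<in>UNIV. softmax \<theta> s a * f a)"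
proof -
  have "0 < (\<Sum>b\<in>UNIV. exp (\<theta> s b))" by (auto intro: sum_pos)
  then show ?thesis by (simp add: softmax_def sum_distrib_left)
qed

lemma softmax_expectation_mono:
  fixes \<theta> \<theta>' :: "'s \<Rightarrow> 'a::finite \<Rightarrow> real" and Q :: "'a \<Rightarrow> real"
    and s :: 's
  defines "V \<equiv> \<Sum>b\<in>UNIV. softmax \<theta> s b * Q b"
  assumes aligned: "\<And>a. 0 \<le> (\<theta>' s a - \<theta> s a) * (Q a - V)"
  shows "V \<le> (\<Sum>a\<in>UNIV. softmax \<theta>' s a * Q a)"
proof -
  have centered: "(\<Sum>a\<in>UNIV. softmax \<theta> s a * (Q a - V)) = (\<Sum>a\<in>UNIV. softmax \<theta> s a * Q a) - V"
    for \<theta> :: "'s \<Rightarrow> 'a \<Rightarrow> real"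
    using stochastic_softmax[of \<theta>]
    by (simp add: right_diff_distrib sum_subtractf stochastic_def flip: sum_distrib_right)
  have "0 = (\<Sum>a\<in>UNIV. exp (\<theta> s a) * (Q a - V))"
    unfolding sum_exp_eq_partition_times_softmax[of \<theta> s] centered by (simp add: V_def)
  also have "\<dots> \<le> (\<Sum>a\<in>UNIV. exp (\<theta>' s a) * (Q a - V))"
  proof (rule sum_mono)
    fix a
    show "exp (\<theta> s a) * (Q a - V) \<le> exp (\<theta>' s a) * (Q a - V)"
      using aligned[of a] by (cases "0 \<le> Q a - V")
        (auto simp: zero_le_mult_iff intro: mult_right_mono mult_right_mono_neg)
  qed
  also have "\<dots> = (\<Sum>b\<in>UNIV. exp (\<theta>' s b)) * ((\<Sum>a\<in>UNIV. softmax \<theta>' s a * Q a) - V)"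
    unfolding sum_exp_eq_partition_times_softmax[of \<theta>' s] centered ..
  finally show ?thesis
    using sum_pos[of UNIV "\<lambda>b. exp (\<theta>' s b)"] by (simp add: zero_le_mult_iff)
qed

lemma softmax_advantage_step_improves:
  assumes step: "\<And>a. \<theta>' s a = \<theta> s a + c a * (Q a - (\<Sum>b\<in>UNIV. softmax \<theta> s b * Q b))"
    and "\<And>a. 0 \<le> c a"
  shows "(\<Sum>a\<in>UNIV. softmax \<theta> s a * Q a) \<le> (\<Sum>a\<in>UNIV. softmax \<theta>' s a * Q a)"
proof (rule softmax_expectation_mono)
  fix a
  show "0 \<le> (\<theta>' s a - \<theta> s a) * (Q a - (\<Sum>b\<in>UNIV. softmax \<theta> s b * Q b))"
    using \<open>0 \<le> c a\<close> by (simp add: step mult.assoc flip: power2_eq_square)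
qed

theorem lemma1:
  fixes P :: "'s::finite \<Rightarrow> 'a::finite \<Rightarrow> (real \<times> 's) measure"
    and \<rho> :: "(real \<times> 's) measure \<Rightarrow> ((real \<times> 's) \<Rightarrow> real) \<Rightarrow> ereal"
    and \<gamma> \<eta> :: real
    and d :: "'s \<Rightarrow> real"
    and \<theta> :: "nat \<Rightarrow> 's \<Rightarrow> 'a \<Rightarrow> real"
  assumes prob: "\<And>s a. prob_space (P s a)"
    and sets_P: "\<And>s a. sets (P s a) = sets (borel \<Otimes>\<^sub>M count_space UNIV)"
    and rew01: "\<And>s a. AE x in P s a. fst x \<in> {0..1}"
    and dens: "\<And>s a. \<exists>f B. distributed (P s a) lborel fst f \<and> (\<forall>r. f r \<le> ennreal B)"
    and gamma: "0 < \<gamma>" "\<gamma> < 1"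
    and coh: "\<And>s a. coherent_risk (P s a) (\<rho> (P s a))"
    and d_pos: "\<And>s. 0 < d s" and d_le: "\<And>s. d s \<le> 1" and d_sum: "(\<Sum>s\<in>UNIV. d s) = 1"
    and eta: "0 < \<eta>" "\<eta> \<le> (1 - \<gamma>) / 5"
    and iter: "\<And>t s a. \<theta> (Suc t) s a = \<theta> t s a + \<eta> * d s * softmax (\<theta> t) s a *
                 (Qpi \<rho> P \<gamma> (softmax (\<theta> t)) s a - Vpi \<rho> P \<gamma> (softmax (\<theta> t)) s)"
  shows "\<forall>t s a. Qpi \<rho> P \<gamma> (softmax (\<theta> (Suc t))) s a \<ge> Qpi \<rho> P \<gamma> (softmax (\<theta> t)) s a
               \<and> Vpi \<rho> P \<gamma> (softmax (\<theta> (Suc t))) s \<ge> Vpi \<rho> P \<gamma> (softmax (\<theta> t)) s"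
proof (intro allI conjI)
  fix t s a
  have improves: "(\<Sum>a\<in>UNIV. softmax (\<theta> t) s a * Qpi \<rho> P \<gamma> (softmax (\<theta> t)) s a)
      \<le> (\<Sum>a\<in>UNIV. softmax (\<theta> (Suc t)) s a * Qpi \<rho> P \<gamma> (softmax (\<theta> t)) s a)" for s
  proof (rule softmax_advantage_step_improves[where c = "\<lambda>a. \<eta> * d s * softmax (\<theta> t) s a"])
    show "\<theta> (Suc t) s a = \<theta> t s a + \<eta> * d s * softmax (\<theta> t) s a *
        (Qpi \<rho> P \<gamma> (softmax (\<theta> t)) s a - (\<Sum>b\<in>UNIV. softmax (\<theta> t) s b * Qpi \<rho> P \<gamma> (softmax (\<theta> t)) s b))"
      for a
      using iter by (simp add: Vpi_def)
    show "0 \<le> \<eta> * d s * softmax (\<theta> t) s a" for a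
      using eta(1) d_pos[of s] softmax_pos[of "\<theta> t" s a] by simp
  qed
  note improvement = coh sets_P less_imp_le[OF gamma(1)] gamma(2) stochastic_softmax stochastic_softmax improves
  show "Qpi \<rho> P \<gamma> (softmax (\<theta> t)) s a \<le> Qpi \<rho> P \<gamma> (softmax (\<theta> (Suc t))) s a"
    by (rule coherent_policy_improvement[OF improvement])
  show "Vpi \<rho> P \<gamma> (softmax (\<theta> t)) s \<le> Vpi \<rho> P \<gamma> (softmax (\<theta> (Suc t))) s"
    by (rule coherent_policy_improvement_Vpi[OF improvement])
qed

end
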